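(* Let $\Gamma$ be the path on $K$ vertices. Assume either that $\lambda>1$ and $K=o(\sqrt n)$, or that $\lambda<1$ and $K=\ln(n)/\ln(1/\lambda)-\omega(\ln(\ln(n)))$. Then the total variation distance between $\mathbb{P}_0$ and $\mathbb{P}_1$ tends to $0$ as $n\to\infty$. Consequently, for any test $T(G)\in\{0,1\}$, $\mathbb{P}_1(T(G)=1)-\mathbb{P}_0(T(G)=1)\to0$.
   Context: Model: $n$ nodes; $\lambda>0$ fixed. $\mathbb{P}_0$: $G\sim\mathcal G(n,\lambda/n)$. $\mathbb{P}_1$: $G=G_0\cup G'$ with $G_0\sim\mathcal G(n,\lambda/n)$ and $G'$ the image of the path $1-2-\cdots-K$ under a uniformly random injection $[K]\to[n]$ independent of $G_0$. *)

theory Defs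
  imports "HOL-Probability.Probability" "HOL-Library.Landau_Symbols"
begin

text \<open>Vertices are 0,...,n-1; a graph is its set of edges, each edge a 2-element set.\<close>

definition all_edges :: "nat \<Rightarrow> nat set set" where
  "all_edges n = {e. \<exists>i j. i < j \<and> j < n \<and> e = {i, j}}"

definition erdos_renyi :: "nat \<Rightarrow> real \<Rightarrow> nat set set pmf" where
  "erdos_renyi n p =
     map_pmf (\<lambda>b. {e \<in> all_edges n. b e})
             (Pi_pmf (all_edges n) False (\<lambda>_. bernoulli_pmf p))"

definition injections :: "nat \<Rightarrow> nat \<Rightarrow> (nat \<Rightarrow> nat) set" where
  "injections K n = {f \<in> {..<K} \<rightarrow>\<^sub>E {..<n}. inj_on f {..<K}}"

definition path_image :: "nat \<Rightarrow> (nat \<Rightarrow> nat) \<Rightarrow> nat set set" where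
  "path_image K f = {{f i, f (Suc i)} | i. Suc i < K}"

definition P0 :: "nat \<Rightarrow> real \<Rightarrow> nat set set pmf" where
  "P0 n lam = erdos_renyi n (lam / real n)"

definition P1 :: "nat \<Rightarrow> real \<Rightarrow> nat \<Rightarrow> nat set set pmf" where
  "P1 n lam K =
     bind_pmf (erdos_renyi n (lam / real n)) (\<lambda>G0.
     bind_pmf (pmf_of_set (injections K n)) (\<lambda>f.
     return_pmf (G0 \<union> path_image K f)))"

definition tv_dist :: "'a pmf \<Rightarrow> 'a pmf \<Rightarrow> real" where
  "tv_dist p q = (SUP A. \<bar>measure_pmf.prob p A - measure_pmf.prob q A\<bar>)"

end

theory Submission
  imports Defs "HOL-Real_Asymp.Real_Asymp"
begin

(* With p = lam/n, the planted model P1 has density L with respect to P0 = G(n, p), where L(G)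
   averages [H_f <= G] p^-|H_f| over the planted paths H_f.  By Cauchy-Schwarz the total variation
   distance is at most sqrt (E_0[L^2] - 1), and E_0[L^2] is the average of p^-|H_f /\ H_g| over
   pairs of planted paths.  Fix H_g and grow H_f one vertex at a time, prepending to a list of distinct
   vertices: a newly shared edge must join the new vertex to the current endpoint, and since H_g has
   maximum degree two there are at most two such vertices, or one if the last edge was already
   shared.  The weighted counts therefore satisfy a two-dimensional linear recurrence, which gives
   E_0[L^2] <= (1 + x)^K <= exp (K x) with x = 2K/(n-K) * r * sum_{j<K} r^j and r = n/(lam (n-K)).
   For lam > 1 the geometric sum is bounded and K x = O(K^2/n); for lam < 1 it is at most K r^K,
   and the hypothesis on K gives r^K <= e n / (ln n)^4, hence K x = O(1 / ln n). *)

section \<open>Total variation and the chi-square bound\<close>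

lemma prob_eq_sum_pmf:
  fixes M :: "'a pmf"
  assumes "finite \<Omega>" and "set_pmf M \<subseteq> \<Omega>"
  shows "measure_pmf.prob M A = (\<Sum>x\<in>\<Omega>. indicator A x * pmf M x)"
proof -
  have "measure_pmf.prob M A = measure_pmf.prob M (\<Omega> \<inter> A)"
    using assms(2) by (intro measure_eq_AE) (auto simp: AE_measure_pmf_iff)
  also have "\<dots> = (\<Sum>x\<in>\<Omega> \<inter> A. pmf M x)"
    using assms(1) by (simp add: measure_measure_pmf_finite)
  also have "\<dots> = (\<Sum>x\<in>\<Omega>. indicator A x * pmf M x)"
    using assms(1) by (simp add: sum.inter_restrict indicator_def if_distrib cong: if_cong)
  finally show ?thesis .
qed

text \<open>Cauchy-Schwarz applied to \<open>Q A - P A = E\<^sub>P[1\<^sub>A (L - 1)]\<close>.\<close>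
lemma abs_prob_diff_le_chi_square:
  fixes P Q :: "'a pmf" and L :: "'a \<Rightarrow> real"
  assumes fin: "finite \<Omega>" and sub: "set_pmf P \<subseteq> \<Omega>" and dens: "\<And>x. pmf Q x = L x * pmf P x"
  shows "\<bar>measure_pmf.prob Q A - measure_pmf.prob P A\<bar> \<le> sqrt ((\<Sum>x\<in>\<Omega>. (L x)\<^sup>2 * pmf P x) - 1)"
proof -
  have subQ: "set_pmf Q \<subseteq> \<Omega>"
    using sub by (auto simp: set_pmf_iff dens)
  have sP: "(\<Sum>x\<in>\<Omega>. pmf P x) = 1" and sL: "(\<Sum>x\<in>\<Omega>. L x * pmf P x) = 1"
    using sum_pmf_eq_1[OF fin sub] sum_pmf_eq_1[OF fin subQ] by (simp_all add: dens)
  define a where "a x = indicator A x * sqrt (pmf P x)" for x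
  define b where "b x = (L x - 1) * sqrt (pmf P x)" for x
  have sq: "sqrt (pmf P x) * sqrt (pmf P x) = pmf P x" for x by simp
  have diff: "measure_pmf.prob Q A - measure_pmf.prob P A = (\<Sum>x\<in>\<Omega>. a x * b x)"
    unfolding prob_eq_sum_pmf[OF fin sub] prob_eq_sum_pmf[OF fin subQ] a_def b_def
      sum_subtractf[symmetric]
    by (intro sum.cong refl) (simp add: dens algebra_simps sq)
  have sa: "(\<Sum>x\<in>\<Omega>. (a x)\<^sup>2) \<le> 1"
    using sum_mono[of \<Omega> "\<lambda>x. (a x)\<^sup>2" "pmf P"] sP
    by (auto simp: a_def indicator_def power2_eq_square)
  have sb: "(\<Sum>x\<in>\<Omega>. (b x)\<^sup>2) = (\<Sum>x\<in>\<Omega>. (L x)\<^sup>2 * pmf P x) - 1"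
  proof -
    have "(\<Sum>x\<in>\<Omega>. (b x)\<^sup>2) = (\<Sum>x\<in>\<Omega>. (L x)\<^sup>2 * pmf P x - 2 * (L x * pmf P x) + pmf P x)"
      unfolding b_def by (intro sum.cong refl) (simp add: power2_eq_square algebra_simps sq)
    then show ?thesis
      using sP sL by (simp add: sum.distrib sum_subtractf sum_distrib_left[symmetric])
  qed
  have "(\<Sum>x\<in>\<Omega>. a x * b x)\<^sup>2 \<le> (\<Sum>x\<in>\<Omega>. (a x)\<^sup>2) * (\<Sum>x\<in>\<Omega>. (b x)\<^sup>2)"
    by (rule Cauchy_Schwarz_ineq_sum)
  also have "\<dots> \<le> (\<Sum>x\<in>\<Omega>. (b x)\<^sup>2)"
    using sa by (intro mult_left_le_one_le sum_nonneg) auto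
  finally have "\<bar>\<Sum>x\<in>\<Omega>. a x * b x\<bar> \<le> sqrt ((\<Sum>x\<in>\<Omega>. (L x)\<^sup>2 * pmf P x) - 1)"
    using sb by (metis real_sqrt_abs real_sqrt_le_mono)
  then show ?thesis using diff by simp
qed

lemma abs_prob_diff_le_tv_dist:
  "\<bar>measure_pmf.prob p A - measure_pmf.prob q A\<bar> \<le> tv_dist p q"
proof -
  have "\<bar>measure_pmf.prob p B - measure_pmf.prob q B\<bar> \<le> 1" for B
    using measure_pmf.prob_le_1[of p B] measure_pmf.prob_le_1[of q B]
      measure_nonneg[of p B] measure_nonneg[of q B] by arith
  then show ?thesis
    unfolding tv_dist_def by (intro cSUP_upper bdd_aboveI2) auto
qed

lemma tv_dist_nonneg: "0 \<le> tv_dist p q"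
  using abs_prob_diff_le_tv_dist[of p "{}" q] by simp

lemma tv_dist_le:
  assumes "\<And>A. \<bar>measure_pmf.prob p A - measure_pmf.prob q A\<bar> \<le> b"
  shows "tv_dist p q \<le> b"
  unfolding tv_dist_def using assms by (intro cSUP_least) auto

section \<open>Erdos-Renyi graphs\<close>

lemma finite_all_edges: "finite (all_edges n)"
  by (rule finite_subset[of _ "Pow {..<n}"]) (auto simp: all_edges_def)

lemma set_pmf_erdos_renyi: "set_pmf (erdos_renyi n p) \<subseteq> Pow (all_edges n)"
  unfolding erdos_renyi_def by auto

lemma prob_erdos_renyi_edgewise:
  assumes "\<And>G. G \<subseteq> all_edges n \<Longrightarrow> G \<in> X \<longleftrightarrow> (\<forall>e\<in>all_edges n. (e \<in> G) \<in> B e)"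
  shows "measure_pmf.prob (erdos_renyi n p) X
       = (\<Prod>e\<in>all_edges n. measure_pmf.prob (bernoulli_pmf p) (B e))"
proof -
  let ?E = "all_edges n"
  let ?Q = "Pi_pmf ?E False (\<lambda>_. bernoulli_pmf p)"
  have "measure_pmf.prob (erdos_renyi n p) X = measure_pmf.prob ?Q {b. {e \<in> ?E. b e} \<in> X}"
    unfolding erdos_renyi_def by (simp add: vimage_def)
  also have "\<dots> = measure_pmf.prob ?Q (PiE_dflt ?E False B)"
  proof (rule measure_eq_AE)
    show "AE b in measure_pmf ?Q. b \<in> {b. {e \<in> ?E. b e} \<in> X} \<longleftrightarrow> b \<in> PiE_dflt ?E False B"
      using set_Pi_pmf_subset[OF finite_all_edges[of n], of False "\<lambda>_. bernoulli_pmf p"]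
      by (auto simp: AE_measure_pmf_iff PiE_dflt_def assms)
  qed auto
  also have "\<dots> = (\<Prod>e\<in>?E. measure_pmf.prob (bernoulli_pmf p) (B e))"
    by (rule measure_Pi_pmf_PiE_dflt[OF finite_all_edges])
  finally show ?thesis .
qed

lemma prod_if_mem_eq_power:
  assumes "finite A" "S \<subseteq> A"
  shows "(\<Prod>x\<in>A. if x \<in> S then c else 1) = c ^ card S"
  using assms by (simp add: prod.inter_restrict[symmetric] Int_absorb1)

lemma prob_erdos_renyi_superset:
  assumes "S \<subseteq> all_edges n" "0 \<le> p" "p \<le> 1"
  shows "measure_pmf.prob (erdos_renyi n p) {G. S \<subseteq> G} = p ^ card S"
proof -
  have "measure_pmf.prob (erdos_renyi n p) {G. S \<subseteq> G}
      = (\<Prod>e\<in>all_edges n. measure_pmf.prob (bernoulli_pmf p) (if e \<in> S then {True} else UNIV))"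
    by (rule prob_erdos_renyi_edgewise) (use assms in auto)
  also have "\<dots> = (\<Prod>e\<in>all_edges n. if e \<in> S then p else 1)"
    using assms by (intro prod.cong) (auto simp: measure_pmf_single)
  finally show ?thesis
    using assms by (simp add: prod_if_mem_eq_power finite_all_edges)
qed

text \<open>Compared with \<open>G\<^sub>0 = G\<close>, the event \<open>G\<^sub>0 \<union> H = G\<close> leaves the edges of \<open>H\<close> unconstrained
  instead of requiring each of them, which has probability \<open>p\<close>.\<close>
lemma prob_erdos_renyi_union_eq:
  assumes H: "H \<subseteq> all_edges n" and p: "0 < p" "p \<le> 1"
  shows "measure_pmf.prob (erdos_renyi n p) {G0. G0 \<union> H = G}
       = (if H \<subseteq> G then 1 / p ^ card H else 0) * pmf (erdos_renyi n p) G"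
proof (cases "H \<subseteq> G \<and> G \<subseteq> all_edges n")
  case True
  let ?E = "all_edges n" and ?B = "measure_pmf.prob (bernoulli_pmf p)"
  let ?q = "\<lambda>e. ?B (if e \<in> H then UNIV else {e \<in> G})"
  have "measure_pmf.prob (erdos_renyi n p) {G0. G0 \<union> H = G} = (\<Prod>e\<in>?E. ?q e)"
    by (rule prob_erdos_renyi_edgewise) (use True in auto)
  moreover have "pmf (erdos_renyi n p) G = (\<Prod>e\<in>?E. ?B {e \<in> G})"
    unfolding measure_pmf_single[symmetric]
    by (rule prob_erdos_renyi_edgewise) (use True in auto)
  moreover have "?B {e \<in> G} = (if e \<in> H then p else 1) * ?q e" for e
    using True p by (auto simp: measure_pmf_single)
  ultimately show ?thesis
    using True H p by (simp add: prod.distrib prod_if_mem_eq_power finite_all_edges)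
next
  case False
  then have "set_pmf (erdos_renyi n p) \<inter> {G0. G0 \<union> H = G} = {}"
    using H set_pmf_erdos_renyi[of n p] by auto
  moreover have "(if H \<subseteq> G then 1 / p ^ card H else 0) * pmf (erdos_renyi n p) G = 0"
    using False set_pmf_erdos_renyi[of n p] by (auto simp: pmf_eq_0_set_pmf)
  ultimately show ?thesis
    by (simp only: measure_pmf_zero_iff)
qed

section \<open>The likelihood ratio of the planted path\<close>

lemma finite_injections: "finite (injections K n)"
  by (rule finite_subset[of _ "{..<K} \<rightarrow>\<^sub>E {..<n}"]) (auto simp: injections_def finite_PiE)

lemma injections_nonempty: "K \<le> n \<Longrightarrow> injections K n \<noteq> {}"
  using inj_on_id[of "{..<K}"]
  by (auto simp: injections_def intro!: exI[of _ "restrict id {..<K}"] inj_on_restrict_eq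
      split: if_splits)

lemma path_image_subset_all_edges:
  assumes "f \<in> injections K n"
  shows "path_image K f \<subseteq> all_edges n"
proof
  fix e assume "e \<in> path_image K f"
  then obtain i where i: "Suc i < K" and e: "e = {f i, f (Suc i)}"
    by (auto simp: path_image_def)
  have "f i \<noteq> f (Suc i)" "f i < n" "f (Suc i) < n"
    using assms i by (auto simp: injections_def inj_on_eq_iff PiE_iff)
  then show "e \<in> all_edges n"
    unfolding all_edges_def e
    by (intro CollectI exI[of _ "min (f i) (f (Suc i))"] exI[of _ "max (f i) (f (Suc i))"])
      (auto simp: min_def max_def insert_commute)
qed

definition likelihood_ratio :: "nat \<Rightarrow> real \<Rightarrow> nat \<Rightarrow> nat set set \<Rightarrow> real" where
  "likelihood_ratio n p K G =
     (\<Sum>f\<in>injections K n. if path_image K f \<subseteq> G then 1 / p ^ card (path_image K f) else 0)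
       / card (injections K n)"

lemma pmf_P1:
  assumes "K \<le> n" "0 < lam" "lam \<le> real n"
  shows "pmf (P1 n lam K) G = likelihood_ratio n (lam / n) K G * pmf (P0 n lam) G"
proof -
  let ?p = "lam / real n" and ?I = "injections K n"
  have p: "0 < ?p" "?p \<le> 1" using assms by auto
  have "P1 n lam K = pmf_of_set ?I \<bind> (\<lambda>f. map_pmf (\<lambda>G0. G0 \<union> path_image K f) (erdos_renyi n ?p))"
    unfolding P1_def map_pmf_def by (rule bind_commute_pmf)
  then have "pmf (P1 n lam K) G
      = (\<Sum>f\<in>?I. measure_pmf.prob (erdos_renyi n ?p) {G0. G0 \<union> path_image K f = G}) / card ?I"
    using assms by (simp add: pmf_bind pmf_map vimage_def integral_pmf_of_set
        finite_injections injections_nonempty)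
  also have "\<dots> = likelihood_ratio n ?p K G * pmf (P0 n lam) G"
    using p unfolding likelihood_ratio_def P0_def
    by (simp add: prob_erdos_renyi_union_eq path_image_subset_all_edges sum_distrib_right)
  finally show ?thesis .
qed

lemma expectation_overlap_pair:
  assumes H1: "H1 \<subseteq> all_edges n" and H2: "H2 \<subseteq> all_edges n" and p: "0 < p" "p \<le> 1"
  shows "(\<Sum>G\<in>Pow (all_edges n). (if H1 \<subseteq> G then 1 / p ^ card H1 else 0)
             * (if H2 \<subseteq> G then 1 / p ^ card H2 else 0) * pmf (erdos_renyi n p) G)
       = (1 / p) ^ card (H1 \<inter> H2)"
proof -
  let ?E = "all_edges n" and ?M = "erdos_renyi n p"
  have fin: "finite H1" "finite H2"
    using finite_subset[OF H1 finite_all_edges] finite_subset[OF H2 finite_all_edges] .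
  have "(\<Sum>G\<in>Pow ?E. (if H1 \<subseteq> G then 1 / p ^ card H1 else 0)
             * (if H2 \<subseteq> G then 1 / p ^ card H2 else 0) * pmf ?M G)
      = 1 / (p ^ card H1 * p ^ card H2) * (\<Sum>G\<in>Pow ?E. indicator {G. H1 \<union> H2 \<subseteq> G} G * pmf ?M G)"
    by (auto simp: sum_distrib_left indicator_def intro!: sum.cong)
  also have "(\<Sum>G\<in>Pow ?E. indicator {G. H1 \<union> H2 \<subseteq> G} G * pmf ?M G)
      = measure_pmf.prob ?M {G. H1 \<union> H2 \<subseteq> G}"
    by (rule prob_eq_sum_pmf[symmetric]) (simp_all add: finite_all_edges set_pmf_erdos_renyi)
  also have "\<dots> = p ^ card (H1 \<union> H2)"
    using H1 H2 p by (intro prob_erdos_renyi_superset) auto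
  also have "p ^ card H1 * p ^ card H2 = p ^ card (H1 \<union> H2) * p ^ card (H1 \<inter> H2)"
    using card_Un_Int[OF fin] by (simp add: power_add[symmetric])
  finally show ?thesis
    using p by (simp add: power_one_over)
qed

lemma second_moment_likelihood_ratio:
  assumes "0 < p" "p \<le> 1"
  shows "(\<Sum>G\<in>Pow (all_edges n). (likelihood_ratio n p K G)\<^sup>2 * pmf (erdos_renyi n p) G)
       = (\<Sum>f\<in>injections K n. \<Sum>g\<in>injections K n. (1 / p) ^ card (path_image K f \<inter> path_image K g))
         / (card (injections K n))\<^sup>2"
proof -
  let ?I = "injections K n" and ?M = "erdos_renyi n p"
  define a where "a f G = (if path_image K f \<subseteq> G then 1 / p ^ card (path_image K f) else 0)" for f G
  have "(likelihood_ratio n p K G)\<^sup>2 * pmf ?M G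
      = (\<Sum>f\<in>?I. \<Sum>g\<in>?I. a f G * a g G) * pmf ?M G / (card ?I)\<^sup>2" for G
    by (simp add: likelihood_ratio_def a_def[symmetric] power2_eq_square sum_product)
  also have "(\<Sum>f\<in>?I. \<Sum>g\<in>?I. a f G * a g G) * pmf ?M G
      = (\<Sum>f\<in>?I. \<Sum>g\<in>?I. a f G * a g G * pmf ?M G)" for G
    by (simp add: sum_distrib_right)
  finally have "(likelihood_ratio n p K G)\<^sup>2 * pmf ?M G
      = (\<Sum>f\<in>?I. \<Sum>g\<in>?I. a f G * a g G * pmf ?M G) / (card ?I)\<^sup>2" for G .
  then have "(\<Sum>G\<in>Pow (all_edges n). (likelihood_ratio n p K G)\<^sup>2 * pmf ?M G)
      = (\<Sum>f\<in>?I. \<Sum>g\<in>?I. \<Sum>G\<in>Pow (all_edges n). a f G * a g G * pmf ?M G) / (card ?I)\<^sup>2"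
    by (simp add: sum_divide_distrib[symmetric] sum.swap[where A = "Pow _"])
  then show ?thesis
    using assms
    by (simp add: a_def expectation_overlap_pair path_image_subset_all_edges)
qed

section \<open>A coupled linear recurrence\<close>

lemma coupled_recurrence_step:
  fixes S T S' T' X a b c e \<rho> R :: real
  assumes S: "S \<le> X" and T: "T \<le> e * R * X"
    and S': "S' \<le> a * S + c * T" and T': "T' \<le> b * S + c * T"
    and b: "b \<le> e * a" and c: "c \<le> \<rho> * a"
    and nonneg: "0 \<le> X" "0 \<le> a" "0 \<le> b" "0 \<le> c" "0 \<le> e" "0 \<le> R"
  shows "S' \<le> (1 + e * \<rho> * R) * (a * X)" and "T' \<le> e * (1 + \<rho> * R) * (a * X)"
proof -
  have "c * T \<le> c * (e * R * X)"
    using T nonneg by (simp add: mult_left_mono)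
  also have "\<dots> \<le> \<rho> * a * (e * R * X)"
    using c nonneg by (intro mult_right_mono) auto
  finally have cT: "c * T \<le> e * \<rho> * R * (a * X)"
    by (simp add: algebra_simps)
  have "a * S \<le> a * X"
    using S nonneg by (simp add: mult_left_mono)
  with S' cT show "S' \<le> (1 + e * \<rho> * R) * (a * X)"
    by (simp add: algebra_simps)
  have "b * S \<le> b * X"
    using S nonneg by (simp add: mult_left_mono)
  also have "\<dots> \<le> e * (a * X)"
    using b nonneg by (simp add: mult_right_mono mult.assoc[symmetric])
  finally show "T' \<le> e * (1 + \<rho> * R) * (a * X)"
    using T' cT by (simp add: algebra_simps)
qed

text \<open>Induction on \<open>S m \<le> \<sigma>\<^sup>m F m\<close> and \<open>T m \<le> e (\<Sum>j<m. \<rho>\<^sup>j) \<sigma>\<^sup>m F m\<close>, where \<open>\<sigma>\<close> is the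
  growth factor in the conclusion.\<close>
lemma coupled_recurrence_bound:
  fixes S T F a :: "nat \<Rightarrow> real" and b c e \<rho> :: real and K :: nat
  assumes S0: "S 0 \<le> F 0" and T0: "T 0 \<le> 0"
    and F_Suc: "\<And>m. m < K \<Longrightarrow> F (Suc m) = a m * F m"
    and S_Suc: "\<And>m. m < K \<Longrightarrow> S (Suc m) \<le> a m * S m + c * T m"
    and T_Suc: "\<And>m. m < K \<Longrightarrow> T (Suc m) \<le> b * S m + c * T m"
    and b_le: "\<And>m. m < K \<Longrightarrow> b \<le> e * a m"
    and c_le: "\<And>m. m < K \<Longrightarrow> c \<le> \<rho> * a m"
    and F0: "\<And>m. 0 \<le> F m" and a0: "\<And>m. 0 \<le> a m"
    and nonneg: "0 \<le> b" "0 \<le> c" "0 \<le> e" "0 \<le> \<rho>"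
  shows "S K \<le> (1 + e * \<rho> * (\<Sum>j<K. \<rho> ^ j)) ^ K * F K"
proof -
  define R where "R m = (\<Sum>j<m. \<rho> ^ j)" for m
  define \<sigma> where "\<sigma> = 1 + e * \<rho> * R K"
  have R0: "0 \<le> R m" for m
    unfolding R_def using nonneg by (intro sum_nonneg) simp
  have \<sigma>1: "1 \<le> \<sigma>"
    unfolding \<sigma>_def using R0 nonneg by simp
  have R_Suc: "R (Suc m) = 1 + \<rho> * R m" for m
    by (simp add: R_def sum.lessThan_Suc_shift sum_distrib_left del: sum.lessThan_Suc)
  have "S m \<le> \<sigma> ^ m * F m \<and> T m \<le> e * R m * (\<sigma> ^ m * F m)" if "m \<le> K" for m
    using that
  proof (induction m)
    case 0
    then show ?case using S0 T0 by (simp add: R_def)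
  next
    case (Suc m)
    then have m: "m < K" and IH: "S m \<le> \<sigma> ^ m * F m" "T m \<le> e * R m * (\<sigma> ^ m * F m)"
      by auto
    let ?Y = "a m * (\<sigma> ^ m * F m)"
    have Y0: "0 \<le> ?Y" and Y: "\<sigma> ^ Suc m * F (Suc m) = \<sigma> * ?Y"
      using \<sigma>1 F0 a0 by (simp_all add: F_Suc[OF m])
    note step = coupled_recurrence_step[OF IH S_Suc[OF m] T_Suc[OF m] b_le[OF m] c_le[OF m]]
    have "S (Suc m) \<le> (1 + e * \<rho> * R m) * ?Y"
      using step(1) \<sigma>1 F0 a0 nonneg R0 by simp
    also have "\<dots> \<le> \<sigma> * ?Y"
    proof (rule mult_right_mono[OF _ Y0])
      show "1 + e * \<rho> * R m \<le> \<sigma>"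
        unfolding \<sigma>_def R_def using m nonneg
        by (intro add_left_mono mult_left_mono sum_mono2) auto
    qed
    finally have S': "S (Suc m) \<le> \<sigma> ^ Suc m * F (Suc m)"
      unfolding Y .
    have "T (Suc m) \<le> e * R (Suc m) * ?Y"
      using step(2) \<sigma>1 F0 a0 nonneg R0 by (simp add: R_Suc)
    also have "\<dots> \<le> e * R (Suc m) * (\<sigma> ^ Suc m * F (Suc m))"
      unfolding Y using Y0 \<sigma>1 R0 nonneg
      by (intro mult_left_mono) (auto simp: mult_le_cancel_right1)
    finally show ?case
      using S' by simp
  qed
  then show ?thesis
    by (simp add: \<sigma>_def R_def)
qed

section \<open>Counting overlapping paths\<close>

lemma sum_if_eq_mult_card:
  "finite A \<Longrightarrow> (\<Sum>x\<in>A. if P x then a else 0) = (a :: real) * card {x \<in> A. P x}"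
  by (simp add: sum.inter_filter[symmetric])

definition distinct_lists :: "nat \<Rightarrow> nat \<Rightarrow> nat list set" where
  "distinct_lists n m = {xs. length xs = m \<and> distinct xs \<and> set xs \<subseteq> {..<n}}"

lemma finite_distinct_lists: "finite (distinct_lists n m)"
  by (rule finite_subset[of _ "{xs. set xs \<subseteq> {..<n} \<and> length xs = m}"])
    (auto simp: distinct_lists_def intro: finite_lists_length_eq)

lemma distinct_lists_0: "distinct_lists n 0 = {[]}"
  by (auto simp: distinct_lists_def)

lemma sum_distinct_lists_Suc:
  "sum g (distinct_lists n (Suc m)) = (\<Sum>xs\<in>distinct_lists n m. \<Sum>x\<in>{..<n} - set xs. g (x # xs))"
proof -
  have "distinct_lists n (Suc m)
      = (\<lambda>(xs, x). x # xs) ` (SIGMA xs:distinct_lists n m. {..<n} - set xs)"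
  proof (intro equalityI subsetI)
    fix ys assume "ys \<in> distinct_lists n (Suc m)"
    then obtain x xs where "ys = x # xs" "(xs, x) \<in> (SIGMA xs:distinct_lists n m. {..<n} - set xs)"
      by (cases ys) (auto simp: distinct_lists_def)
    then show "ys \<in> (\<lambda>(xs, x). x # xs) ` (SIGMA xs:distinct_lists n m. {..<n} - set xs)"
      by (auto intro: rev_image_eqI)
  qed (auto simp: distinct_lists_def)
  moreover have "inj_on (\<lambda>(xs, x). x # xs) A" for A :: "(nat list \<times> nat) set"
    by (auto intro: inj_onI)
  ultimately show ?thesis
    by (simp add: sum.reindex sum.Sigma finite_distinct_lists case_prod_beta')
qed

lemma card_distinct_lists_Suc:
  "card (distinct_lists n (Suc m)) = (n - m) * card (distinct_lists n m)"
proof -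
  have "card ({..<n} - set xs) = n - m" if "xs \<in> distinct_lists n m" for xs
    using that by (auto simp: distinct_lists_def card_Diff_subset distinct_card)
  then show ?thesis
    using sum_distinct_lists_Suc[of "\<lambda>_. 1::nat" n m] by simp
qed

lemma bij_betw_injections_distinct_lists:
  "bij_betw (\<lambda>f. map f [0..<K]) (injections K n) (distinct_lists n K)"
proof (rule bij_betw_byWitness[where f' = "\<lambda>xs i. if i < K then xs ! i else undefined"])
  show "\<forall>f\<in>injections K n. (\<lambda>i. if i < K then map f [0..<K] ! i else undefined) = f"
    by (auto simp: injections_def PiE_def extensional_def)
  show "\<forall>xs\<in>distinct_lists n K. map (\<lambda>i. if i < K then xs ! i else undefined) [0..<K] = xs"
    by (auto simp: distinct_lists_def intro: nth_equalityI)
  show "(\<lambda>f. map f [0..<K]) ` injections K n \<subseteq> distinct_lists n K"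
    by (auto simp: injections_def distinct_lists_def distinct_map atLeast0LessThan PiE_iff)
  show "(\<lambda>xs i. if i < K then xs ! i else undefined) ` distinct_lists n K \<subseteq> injections K n"
  proof clarify
    fix xs assume "xs \<in> distinct_lists n K"
    then have xs: "length xs = K" "distinct xs" "set xs \<subseteq> {..<n}"
      by (auto simp: distinct_lists_def)
    then have "xs ! i < n" if "i < K" for i
      using that xs by (metis lessThan_iff nth_mem subsetD)
    then show "(\<lambda>i. if i < K then xs ! i else undefined) \<in> injections K n"
      using xs by (auto simp: injections_def inj_on_def nth_eq_iff_index_eq split: if_splits)
  qed
qed

definition walk_edges :: "'a list \<Rightarrow> 'a set set" where
  "walk_edges xs = {{xs ! i, xs ! Suc i} | i. Suc i < length xs}"

lemma finite_walk_edges: "finite (walk_edges xs)"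
  unfolding walk_edges_def
  by (rule finite_image_set, rule finite_subset[of _ "{..<length xs}"]) auto

lemma walk_edges_Cons_Cons: "walk_edges (x # y # xs) = insert {x, y} (walk_edges (y # xs))"
proof (intro equalityI subsetI)
  fix e assume "e \<in> walk_edges (x # y # xs)"
  then obtain i where "Suc i < length (x # y # xs)" "e = {(x # y # xs) ! i, (x # y # xs) ! Suc i}"
    by (auto simp: walk_edges_def)
  then show "e \<in> insert {x, y} (walk_edges (y # xs))"
    by (cases i) (auto simp: walk_edges_def)
next
  fix e assume "e \<in> insert {x, y} (walk_edges (y # xs))"
  then consider "e = {x, y}"
    | i where "Suc i < length (y # xs)" "e = {(y # xs) ! i, (y # xs) ! Suc i}"
    by (auto simp: walk_edges_def)
  then show "e \<in> walk_edges (x # y # xs)"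
  proof cases
    case 1
    then show ?thesis by (force simp: walk_edges_def)
  next
    case (2 i)
    then show ?thesis unfolding walk_edges_def
      by (intro CollectI exI[of _ "Suc i"]) simp
  qed
qed

lemma walk_edges_subset_set: "e \<in> walk_edges ys \<Longrightarrow> e \<subseteq> set ys"
  by (auto simp: walk_edges_def)

lemma neighbours_walk_edges_subset:
  assumes "distinct ys"
  shows "\<exists>a b. {x. {x, y} \<in> walk_edges ys} \<subseteq> {a, b}"
proof (cases "y \<in> set ys")
  case True
  then obtain i where i: "i < length ys" "ys ! i = y"
    by (auto simp: in_set_conv_nth)
  have "{x. {x, y} \<in> walk_edges ys} \<subseteq> {ys ! (i - 1), ys ! Suc i}"
  proof
    fix x assume "x \<in> {x. {x, y} \<in> walk_edges ys}"
    then obtain j where j: "Suc j < length ys" "{x, y} = {ys ! j, ys ! Suc j}"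
      by (auto simp: walk_edges_def)
    then consider "y = ys ! Suc j" "x = ys ! j" | "y = ys ! j" "x = ys ! Suc j"
      by (auto simp: doubleton_eq_iff)
    then show "x \<in> {ys ! (i - 1), ys ! Suc i}"
      using assms i j(1) by cases (auto simp: nth_eq_iff_index_eq)
  qed
  then show ?thesis by blast
next
  case False
  then have "{x. {x, y} \<in> walk_edges ys} = {}"
    using walk_edges_subset_set by blast
  then show ?thesis by blast
qed

lemma path_image_eq_walk_edges: "path_image K f = walk_edges (map f [0..<K])"
  unfolding path_image_def walk_edges_def by (intro Collect_cong ex_cong1) (auto simp del: upt_Suc)

definition overlap_weight :: "'a set set \<Rightarrow> real \<Rightarrow> 'a list \<Rightarrow> real" where
  "overlap_weight E c xs = c ^ card (walk_edges xs \<inter> E)"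

definition adjacent_hd :: "'a set set \<Rightarrow> 'a \<Rightarrow> 'a list \<Rightarrow> bool" where
  "adjacent_hd E x xs \<longleftrightarrow> xs \<noteq> [] \<and> {x, hd xs} \<in> E"

lemma overlap_weight_Cons_le:
  assumes "1 \<le> c"
  shows "overlap_weight E c (x # xs)
         \<le> (if adjacent_hd E x xs then c else 1) * overlap_weight E c xs"
proof (cases xs)
  case Nil
  then show ?thesis by (simp add: overlap_weight_def walk_edges_def adjacent_hd_def)
next
  case (Cons y ys)
  let ?S = "walk_edges xs \<inter> E"
  have S: "walk_edges (x # xs) \<inter> E = (if {x, y} \<in> E then insert {x, y} ?S else ?S)"
    using Cons by (auto simp: walk_edges_Cons_Cons)
  have "c ^ card (insert {x, y} ?S) \<le> c ^ Suc (card ?S)"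
    using assms finite_walk_edges[of xs]
    by (intro power_increasing) (auto simp: card_insert_if)
  then show ?thesis
    using Cons S by (simp add: overlap_weight_def adjacent_hd_def)
qed

text \<open>In a graph \<open>E\<close> of maximum degree two on \<open>V\<close>, this bounds the number of fresh neighbours of
  the head of a list: if the second vertex is already a neighbour, at most one is left.\<close>
fun neighbour_bound :: "'a set set \<Rightarrow> 'a set \<Rightarrow> 'a list \<Rightarrow> real" where
  "neighbour_bound E V [] = 0"
| "neighbour_bound E V (x # xs) = (if adjacent_hd E x xs then 1 else if x \<in> V then 2 else 0)"

text \<open>\<open>1 + overlap_rate c n K\<close> is the growth factor that \<open>coupled_recurrence_bound\<close> gives
  for the sums below, with \<open>e = 2K/(n - K)\<close> and \<open>\<rho> = c/(n - K)\<close>.\<close>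
definition overlap_rate :: "real \<Rightarrow> real \<Rightarrow> nat \<Rightarrow> real" where
  "overlap_rate c N K = 2 * real K / (N - K) * (c / (N - K)) * (\<Sum>j<K. (c / (N - K)) ^ j)"

locale bounded_overlap =
  fixes E :: "nat set set" and V :: "nat set" and K :: nat and c :: real
  assumes edge_in_V: "{x, y} \<in> E \<Longrightarrow> x \<in> V"
    and finite_neighbours: "finite {x. {x, y} \<in> E}"
    and card_neighbours_le: "card {x. {x, y} \<in> E} \<le> 2"
    and finite_V: "finite V"
    and card_V_le: "card V \<le> K"
    and one_le_c: "1 \<le> c"
begin

lemma card_fresh_neighbours_le:
  "card {x \<in> A - set xs. adjacent_hd E x xs} \<le> neighbour_bound E V xs"
proof (cases xs)
  case Nil
  then show ?thesis by (simp add: adjacent_hd_def)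
next
  case (Cons y r)
  let ?N = "{x. {x, y} \<in> E}"
  have "card {x \<in> A - set xs. adjacent_hd E x xs} \<le> card (?N - set xs)"
    using Cons finite_neighbours[of y] by (intro card_mono) (auto simp: adjacent_hd_def)
  moreover have "card (?N - set xs) \<le> neighbour_bound E V xs"
  proof -
    consider "adjacent_hd E y r" | "\<not> adjacent_hd E y r" "y \<in> V" | "y \<notin> V"
      by blast
    then show ?thesis
    proof cases
      case 1
      then obtain z where "z \<in> ?N" "z \<in> set xs"
        using Cons by (cases r) (auto simp: adjacent_hd_def insert_commute)
      then have "card (?N - set xs) \<le> card (?N - {z})"
        using finite_neighbours[of y] by (intro card_mono) auto
      then show ?thesis
        using 1 Cons \<open>z \<in> ?N\<close> card_neighbours_le[of y] finite_neighbours[of y] by simp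
    next
      case 2
      then show ?thesis
        using Cons card_neighbours_le[of y] card_mono[OF finite_neighbours[of y], of "?N - set xs"]
        by simp
    next
      case 3
      then have "?N = {}"
        using edge_in_V[of y] by (auto simp: insert_commute)
      then show ?thesis
        using Cons by simp
    qed
  qed
  ultimately show ?thesis by linarith
qed

lemma sum_overlap_weight_Cons_le:
  assumes "xs \<in> distinct_lists n m"
  shows "(\<Sum>x\<in>{..<n} - set xs. overlap_weight E c (x # xs))
         \<le> real (n - m) * overlap_weight E c xs
           + c * (neighbour_bound E V xs * overlap_weight E c xs)"
proof -
  let ?X = "{..<n} - set xs" and ?w = "overlap_weight E c xs"
  have w0: "0 \<le> ?w" using one_le_c by (simp add: overlap_weight_def)
  have "overlap_weight E c (x # xs) \<le> ?w + (if adjacent_hd E x xs then c else 0) * ?w" for x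
    using overlap_weight_Cons_le[OF one_le_c, of E x xs] w0 by (cases "adjacent_hd E x xs") auto
  then have "(\<Sum>x\<in>?X. overlap_weight E c (x # xs))
      \<le> (\<Sum>x\<in>?X. ?w + (if adjacent_hd E x xs then c else 0) * ?w)"
    by (intro sum_mono)
  also have "\<dots> = card ?X * ?w + (\<Sum>x\<in>?X. if adjacent_hd E x xs then c else 0) * ?w"
    by (simp add: sum.distrib sum_distrib_right)
  also have "\<dots> = card ?X * ?w + c * card {x \<in> ?X. adjacent_hd E x xs} * ?w"
    using sum_if_eq_mult_card[of ?X "\<lambda>x. adjacent_hd E x xs" c] by simp
  also have "\<dots> \<le> real (n - m) * ?w + c * (neighbour_bound E V xs * ?w)"
    using assms card_fresh_neighbours_le[of "{..<n}" xs] one_le_c w0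
    by (auto simp: distinct_lists_def card_Diff_subset distinct_card mult.assoc
        intro!: mult_left_mono mult_right_mono)
  finally show ?thesis .
qed

lemma sum_neighbour_bound_Cons_le:
  "(\<Sum>x\<in>{..<n} - set xs. neighbour_bound E V (x # xs) * overlap_weight E c (x # xs))
     \<le> 2 * real K * overlap_weight E c xs + c * (neighbour_bound E V xs * overlap_weight E c xs)"
proof -
  let ?X = "{..<n} - set xs" and ?w = "overlap_weight E c xs"
  have w0: "0 \<le> ?w" using one_le_c by (simp add: overlap_weight_def)
  have "neighbour_bound E V (x # xs) * overlap_weight E c (x # xs)
      \<le> (if adjacent_hd E x xs then c else 0) * ?w + (if x \<in> V then 2 else 0) * ?w" for x
    using overlap_weight_Cons_le[OF one_le_c, of E x xs] w0
    by (cases "adjacent_hd E x xs"; cases "x \<in> V") auto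
  then have "(\<Sum>x\<in>?X. neighbour_bound E V (x # xs) * overlap_weight E c (x # xs))
      \<le> (\<Sum>x\<in>?X. (if adjacent_hd E x xs then c else 0) * ?w + (if x \<in> V then 2 else 0) * ?w)"
    by (intro sum_mono)
  also have "\<dots> = (\<Sum>x\<in>?X. if adjacent_hd E x xs then c else 0) * ?w
      + (\<Sum>x\<in>?X. if x \<in> V then 2 else 0) * ?w"
    by (simp add: sum.distrib sum_distrib_right)
  also have "\<dots> = c * card {x \<in> ?X. adjacent_hd E x xs} * ?w + 2 * card {x \<in> ?X. x \<in> V} * ?w"
    using sum_if_eq_mult_card[of ?X "\<lambda>x. adjacent_hd E x xs" c]
      sum_if_eq_mult_card[of ?X "\<lambda>x. x \<in> V" 2]
    by simp
  also have "\<dots> \<le> c * (neighbour_bound E V xs * ?w) + 2 * real K * ?w"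
  proof -
    have "card {x \<in> ?X. x \<in> V} \<le> K"
      using card_mono[OF finite_V, of "{x \<in> ?X. x \<in> V}"] card_V_le by force
    then show ?thesis
      using card_fresh_neighbours_le[of "{..<n}" xs] one_le_c w0
      by (auto simp: mult.assoc intro!: add_mono mult_left_mono mult_right_mono)
  qed
  finally show ?thesis by simp
qed

definition weight_sum :: "nat \<Rightarrow> nat \<Rightarrow> real" where
  "weight_sum n m = (\<Sum>xs\<in>distinct_lists n m. overlap_weight E c xs)"

definition boundary_sum :: "nat \<Rightarrow> nat \<Rightarrow> real" where
  "boundary_sum n m = (\<Sum>xs\<in>distinct_lists n m. neighbour_bound E V xs * overlap_weight E c xs)"

lemma weight_sum_Suc_le:
  "weight_sum n (Suc m) \<le> real (n - m) * weight_sum n m + c * boundary_sum n m"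
  unfolding weight_sum_def boundary_sum_def sum_distinct_lists_Suc
  using sum_mono[OF sum_overlap_weight_Cons_le]
  by (simp add: sum.distrib sum_distrib_left)

lemma boundary_sum_Suc_le:
  "boundary_sum n (Suc m) \<le> 2 * real K * weight_sum n m + c * boundary_sum n m"
  unfolding weight_sum_def boundary_sum_def sum_distinct_lists_Suc
  using sum_mono[OF sum_neighbour_bound_Cons_le]
  by (simp add: sum.distrib sum_distrib_left)

lemma weight_sum_le:
  assumes "K < n"
  shows "weight_sum n K \<le> (1 + overlap_rate c n K) ^ K * card (distinct_lists n K)"
proof -
  have pos: "0 < real n - K" using assms by simp
  have a_ge: "real n - K \<le> real (n - m)" if "m < K" for m
    using that assms by simp
  show ?thesis
    unfolding overlap_rate_def
  proof (rule coupled_recurrence_bound[where S = "weight_sum n" and T = "boundary_sum n"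
        and F = "\<lambda>m. real (card (distinct_lists n m))" and a = "\<lambda>m. real (n - m)"
        and b = "2 * real K" and c = c and e = "2 * real K / (real n - real K)"
        and \<rho> = "c / (real n - real K)"])
    show "weight_sum n 0 \<le> card (distinct_lists n 0)" "boundary_sum n 0 \<le> 0"
      by (simp_all add: weight_sum_def boundary_sum_def distinct_lists_0 overlap_weight_def
          walk_edges_def)
    show "real (card (distinct_lists n (Suc m))) = real (n - m) * card (distinct_lists n m)" for m
      by (simp add: card_distinct_lists_Suc)
    show "2 * real K \<le> 2 * real K / (real n - real K) * real (n - m)"
      and "c \<le> c / (real n - real K) * real (n - m)" if "m < K" for m
      using a_ge[OF that] pos one_le_c by (simp_all add: field_simps mult_left_mono)
    show "weight_sum n (Suc m) \<le> real (n - m) * weight_sum n m + c * boundary_sum n m" for m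
      by (rule weight_sum_Suc_le)
  qed (use boundary_sum_Suc_le pos one_le_c in simp_all)
qed

end

lemma bounded_overlap_walk_edges:
  assumes "distinct ys" "length ys \<le> K" "1 \<le> c"
  shows "bounded_overlap (walk_edges ys) (set ys) K c"
proof
  fix y
  obtain a b where sub: "{x. {x, y} \<in> walk_edges ys} \<subseteq> {a, b}"
    using neighbours_walk_edges_subset[OF assms(1)] by blast
  show "finite {x. {x, y} \<in> walk_edges ys}"
    using sub by (rule finite_subset) simp
  show "card {x. {x, y} \<in> walk_edges ys} \<le> 2"
    using card_mono[OF _ sub] by (simp add: card_insert_if split: if_splits)
qed (use assms walk_edges_subset_set in \<open>auto simp: distinct_card\<close>)

lemma sum_power_card_path_overlap_le:
  assumes g: "g \<in> injections K n" and c: "1 \<le> c" and Kn: "K < n"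
  shows "(\<Sum>f\<in>injections K n. c ^ card (path_image K f \<inter> path_image K g))
       \<le> (1 + overlap_rate c n K) ^ K * card (injections K n)"
proof -
  let ?ys = "map g [0..<K]"
  have ys: "?ys \<in> distinct_lists n K"
    using g bij_betw_injections_distinct_lists by (blast dest: bij_betwE)
  then interpret bounded_overlap "walk_edges ?ys" "set ?ys" K c
    using c by (intro bounded_overlap_walk_edges) (auto simp: distinct_lists_def)
  have "(\<Sum>f\<in>injections K n. c ^ card (path_image K f \<inter> path_image K g)) = weight_sum n K"
    unfolding weight_sum_def overlap_weight_def path_image_eq_walk_edges
    using sum.reindex_bij_betw[OF bij_betw_injections_distinct_lists,
        of "\<lambda>xs. c ^ card (walk_edges xs \<inter> walk_edges ?ys)"] by simp
  also have "\<dots> \<le> (1 + overlap_rate c n K) ^ K * card (injections K n)"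
    using weight_sum_le[OF Kn] bij_betw_same_card[OF bij_betw_injections_distinct_lists] by simp
  finally show ?thesis .
qed

section \<open>Asymptotics of the overlap rate\<close>

lemma one_plus_power_le_exp:
  fixes x :: real
  assumes "0 \<le> x"
  shows "(1 + x) ^ K \<le> exp (real K * x)"
proof -
  have "(1 + x) ^ K \<le> exp x ^ K"
    using assms by (intro power_mono) (auto simp: exp_ge_add_one_self)
  then show ?thesis
    by (simp add: exp_of_nat_mult)
qed

lemma overlap_rate_nonneg: "0 \<le> c \<Longrightarrow> real K < N \<Longrightarrow> 0 \<le> overlap_rate c N K"
  unfolding overlap_rate_def by (intro mult_nonneg_nonneg sum_nonneg) auto

lemma mult_overlap_rate_le:
  assumes KN: "real K < N" and c: "0 \<le> c"
    and A: "2 * real K / (N - K) \<le> A" and B: "c / (N - K) \<le> B"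
    and S: "(\<Sum>j<K. (c / (N - K)) ^ j) \<le> S"
  shows "real K * overlap_rate c N K \<le> real K * (A * B * S)"
proof -
  have nonneg: "0 \<le> 2 * real K / (N - K)" "0 \<le> c / (N - K)" "0 \<le> (\<Sum>j<K. (c / (N - K)) ^ j)"
    using KN c by (auto intro: sum_nonneg)
  have "2 * real K / (N - K) * (c / (N - K)) \<le> A * B"
    using A B nonneg by (rule_tac mult_mono) auto
  moreover have "0 \<le> A * B"
    using A B nonneg by (meson mult_nonneg_nonneg order.trans)
  ultimately have "overlap_rate c N K \<le> A * B * S"
    unfolding overlap_rate_def using S nonneg by (rule_tac mult_mono) auto
  then show ?thesis
    by (simp add: mult_left_mono)
qed

lemma sum_power_le_geometric:
  fixes r q :: real
  assumes "0 \<le> r" "r \<le> q" "q < 1"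
  shows "(\<Sum>j<K. r ^ j) \<le> 1 / (1 - q)"
proof -
  have "(\<Sum>j<K. r ^ j) = (1 - r ^ K) / (1 - r)"
    using assms by (simp add: sum_gp_strict)
  also have "\<dots> \<le> 1 / (1 - r)"
    using assms by (intro divide_right_mono) auto
  also have "\<dots> \<le> 1 / (1 - q)"
    using assms by (intro divide_left_mono) auto
  finally show ?thesis .
qed

lemma overlap_rate_supercritical_le:
  fixes lam N :: real
  assumes lam: "1 < lam" and N: "0 < N" and K: "real K / N \<le> (lam - 1) / (lam + 1)"
  shows "real K < N"
    and "real K * overlap_rate (N / lam) N K \<le> 2 * lam * (lam + 1) / (lam - 1) * (real K ^ 2 / N)"
proof -
  let ?k = "real K"
  have gap: "2 * N / (lam + 1) \<le> N - ?k"
    using K N lam by (simp add: field_simps)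
  moreover have gap0: "0 < 2 * N / (lam + 1)"
    using N lam by simp
  ultimately show KN: "?k < N" by linarith
  have "N / lam / (N - ?k) \<le> N / lam / (2 * N / (lam + 1))"
    using gap gap0 N lam KN by (intro divide_left_mono mult_pos_pos) auto
  also have "\<dots> = (lam + 1) / (2 * lam)"
    using N lam by (simp add: field_simps)
  finally have r: "N / lam / (N - ?k) \<le> (lam + 1) / (2 * lam)" .
  have "2 * ?k / (N - ?k) \<le> 2 * ?k / (2 * N / (lam + 1))"
    using gap gap0 KN by (intro divide_left_mono mult_pos_pos) auto
  also have "\<dots> = ?k * (lam + 1) / N"
    using N lam by (simp add: field_simps)
  finally have A: "2 * ?k / (N - ?k) \<le> ?k * (lam + 1) / N" .
  have q: "(lam + 1) / (2 * lam) < 1"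
    using lam by (simp add: field_simps)
  with r have B: "N / lam / (N - ?k) \<le> 1"
    by linarith
  have "(\<Sum>j<K. (N / lam / (N - ?k)) ^ j) \<le> 1 / (1 - (lam + 1) / (2 * lam))"
    using r q KN N lam by (intro sum_power_le_geometric) auto
  then have S: "(\<Sum>j<K. (N / lam / (N - ?k)) ^ j) \<le> 2 * lam / (lam - 1)"
    using lam by (simp add: field_simps)
  have "real K * overlap_rate (N / lam) N K \<le> K * (?k * (lam + 1) / N * 1 * (2 * lam / (lam - 1)))"
    using mult_overlap_rate_le[OF KN _ A B S] N lam by simp
  also have "\<dots> = 2 * lam * (lam + 1) / (lam - 1) * (real K ^ 2 / N)"
    by (simp add: power2_eq_square mult_ac)
  finally show "real K * overlap_rate (N / lam) N K
      \<le> 2 * lam * (lam + 1) / (lam - 1) * (real K ^ 2 / N)" .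
qed

lemma inverse_power_le_of_log_bound:
  fixes lam N :: real
  assumes "0 < lam" "1 < N" "ln (1 / lam) * K \<le> ln N - 4 * ln (ln N)"
  shows "(1 / lam) ^ K \<le> N / ln N ^ 4"
proof -
  have "(1 / lam) ^ K = exp (ln (1 / lam) * K)"
    using assms(1) exp_of_nat_mult[of K "ln (1 / lam)"] by (simp add: mult.commute)
  also have "\<dots> \<le> exp (ln N - 4 * ln (ln N))"
    using assms(3) by simp
  also have "\<dots> = N / ln N ^ 4"
    using assms(2) exp_of_nat_mult[of 4 "ln (ln N)"] by (simp add: exp_diff)
  finally show ?thesis .
qed

lemma ratio_power_le_exp_1:
  fixes N :: real
  assumes "real K < N" "real K ^ 2 \<le> N - K"
  shows "(N / (N - K)) ^ K \<le> exp 1"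
proof -
  have "(N / (N - K)) ^ K = (1 + K / (N - K)) ^ K"
    using assms(1) by (simp add: field_simps)
  also have "\<dots> \<le> exp (K * (K / (N - K)))"
    using assms(1) by (intro one_plus_power_le_exp) simp
  also have "\<dots> \<le> exp 1"
    using assms by (simp add: power2_eq_square field_simps)
  finally show ?thesis .
qed

lemma overlap_rate_subcritical_le:
  fixes lam N :: real
  defines "L \<equiv> ln (1 / lam)"
  assumes lam: "0 < lam" "lam < 1" and N: "1 < N" "2 \<le> ln N"
    and K: "L * K \<le> ln N - 4 * ln (ln N)"
    and small: "ln N / N \<le> L / 2" "ln N ^ 2 / N \<le> L ^ 2 / 4"
  shows "real K < N"
    and "real K * overlap_rate (N / lam) N K \<le> 8 * exp 1 / (lam * L ^ 3) / ln N"
proof -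
  let ?k = "real K" and ?u = "ln N / L" and ?r = "N / lam / (N - K)"
  have L: "0 < L"
    using lam by (simp add: L_def)
  have "0 < ln (ln N)"
    using N by simp
  then have "L * ?k \<le> ln N"
    using K by linarith
  then have ku: "?k \<le> ?u"
    using L by (simp add: field_simps)
  have uN: "?u \<le> N / 2"
    using small(1) L N by (simp add: field_simps)
  have u2: "?u ^ 2 \<le> N / 4"
    using small(2) L N by (simp add: field_simps power_divide)
  have gap: "N / 2 \<le> N - ?k"
    using ku uN by linarith
  then show KN: "?k < N"
    using N by linarith
  have "?k ^ 2 \<le> ?u ^ 2"
    using ku by (intro power_mono) auto
  then have "(N / (N - K)) ^ K \<le> exp 1"
    using u2 gap N by (intro ratio_power_le_exp_1 KN) auto
  moreover have "(1 / lam) ^ K \<le> N / ln N ^ 4"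
    using K lam N by (intro inverse_power_le_of_log_bound) (auto simp: L_def mult.commute)
  ultimately have "(1 / lam) ^ K * (N / (N - K)) ^ K \<le> N / ln N ^ 4 * exp 1"
    using N KN by (intro mult_mono) auto
  moreover have r_eq: "?r = 1 / lam * (N / (N - K))"
    by simp
  ultimately have rK: "?r ^ K \<le> N / ln N ^ 4 * exp 1"
    by (simp only: power_mult_distrib)
  have ratio: "1 \<le> N / (N - K)" "N / (N - K) \<le> 2"
    using gap KN N by (auto simp: field_simps)
  have "1 \<le> 1 / lam"
    using lam by simp
  then have r1: "1 \<le> ?r"
    unfolding r_eq using mult_mono[OF _ ratio(1)] by fastforce
  have "2 * ?k / (N - ?k) \<le> 2 * ?k / (N / 2)"
    using gap N by (intro divide_left_mono) auto
  also have "\<dots> \<le> 2 * ?u / (N / 2)"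
    using ku N by (intro divide_right_mono) auto
  finally have "2 * ?k / (N - ?k) \<le> 4 * ?u / N"
    by simp
  moreover have "?r \<le> 2 / lam"
    unfolding r_eq using mult_left_mono[OF ratio(2), of "1 / lam"] lam by simp
  moreover have "(\<Sum>j<K. ?r ^ j) \<le> ?u * (N / ln N ^ 4 * exp 1)"
  proof -
    have "(\<Sum>j<K. ?r ^ j) \<le> (\<Sum>j<K. ?r ^ K)"
      using r1 by (intro sum_mono power_increasing) auto
    also have "\<dots> = ?k * ?r ^ K"
      by simp
    also have "\<dots> \<le> ?u * (N / ln N ^ 4 * exp 1)"
      using ku rK r1 by (intro mult_mono) auto
    finally show ?thesis .
  qed
  ultimately have "real K * overlap_rate (N / lam) N K
      \<le> ?k * (4 * ?u / N * (2 / lam) * (?u * (N / ln N ^ 4 * exp 1)))"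
    using KN lam N by (intro mult_overlap_rate_le) auto
  also have "\<dots> \<le> ?u * (4 * ?u / N * (2 / lam) * (?u * (N / ln N ^ 4 * exp 1)))"
    using ku L N lam by (intro mult_right_mono) auto
  also have "\<dots> = 8 * exp 1 / (lam * L ^ 3) / ln N"
    using L N lam by (simp add: field_simps power_numeral_reduce)
  finally show "real K * overlap_rate (N / lam) N K \<le> 8 * exp 1 / (lam * L ^ 3) / ln N" .
qed

section \<open>Convergence of the total variation distance\<close>

lemma tv_dist_P0_P1_le:
  assumes K: "K < n" and lam: "0 < lam" "lam \<le> n"
  shows "tv_dist (P0 n lam) (P1 n lam K) \<le> sqrt (exp (real K * overlap_rate (n / lam) n K) - 1)"
proof (rule tv_dist_le)
  fix A
  let ?p = "lam / real n" and ?I = "injections K n"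
  let ?M = "\<Sum>G\<in>Pow (all_edges n). (likelihood_ratio n ?p K G)\<^sup>2 * pmf (P0 n lam) G"
  let ?B = "(1 + overlap_rate (n / lam) n K) ^ K"
  have p: "0 < ?p" "?p \<le> 1" and c: "1 / ?p = n / lam" "1 \<le> n / lam"
    using K lam by auto
  have chi: "\<bar>measure_pmf.prob (P1 n lam K) A - measure_pmf.prob (P0 n lam) A\<bar> \<le> sqrt (?M - 1)"
    using K lam by (intro abs_prob_diff_le_chi_square pmf_P1)
      (auto simp: P0_def finite_all_edges set_pmf_erdos_renyi)
  moreover have "?M \<le> ?B"
  proof -
    have "(\<Sum>f\<in>?I. \<Sum>g\<in>?I. (n / lam) ^ card (path_image K f \<inter> path_image K g))
        = (\<Sum>g\<in>?I. \<Sum>f\<in>?I. (n / lam) ^ card (path_image K f \<inter> path_image K g))"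
      by (rule sum.swap)
    also have "\<dots> \<le> (\<Sum>g\<in>?I. ?B * card ?I)"
      using K c by (intro sum_mono sum_power_card_path_overlap_le) auto
    finally show ?thesis
      unfolding P0_def second_moment_likelihood_ratio[OF p] c(1)
      using K finite_injections injections_nonempty
      by (simp add: divide_le_eq power2_eq_square mult_ac card_gt_0_iff)
  qed
  moreover have "?B \<le> exp (real K * overlap_rate (n / lam) n K)"
    using K c by (intro one_plus_power_le_exp overlap_rate_nonneg) auto
  ultimately have "sqrt (?M - 1) \<le> sqrt (exp (real K * overlap_rate (n / lam) n K) - 1)"
    by (intro real_sqrt_le_mono) linarith
  from order.trans[OF chi this]
  show "\<bar>measure_pmf.prob (P0 n lam) A - measure_pmf.prob (P1 n lam K) A\<bar>
      \<le> sqrt (exp (real K * overlap_rate (n / lam) n K) - 1)"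
    by (simp add: abs_minus_commute)
qed

lemma tv_dist_P0_P1_tendsto_0:
  fixes K :: "nat \<Rightarrow> nat"
  assumes lam: "0 < lam" and K: "eventually (\<lambda>n. K n < n) sequentially"
    and rate: "(\<lambda>n. real (K n) * overlap_rate (n / lam) n (K n)) \<longlonglongrightarrow> 0"
  shows "(\<lambda>n. tv_dist (P0 n lam) (P1 n lam (K n))) \<longlonglongrightarrow> 0"
proof (rule Lim_null_comparison)
  have "eventually (\<lambda>n. lam \<le> real n) sequentially"
    using filterlim_real_sequentially by (simp add: filterlim_at_top)
  with K show "eventually (\<lambda>n. norm (tv_dist (P0 n lam) (P1 n lam (K n)))
      \<le> sqrt (exp (real (K n) * overlap_rate (n / lam) n (K n)) - 1)) sequentially"
    by eventually_elim (simp add: tv_dist_nonneg tv_dist_P0_P1_le lam)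
  show "(\<lambda>n. sqrt (exp (real (K n) * overlap_rate (n / lam) n (K n)) - 1)) \<longlonglongrightarrow> 0"
    using tendsto_real_sqrt[OF tendsto_diff[OF tendsto_exp[OF rate] tendsto_const, of 1]] by simp
qed

lemma supercritical_overlap_rate_tendsto_0:
  fixes K :: "nat \<Rightarrow> nat"
  assumes lam: "1 < lam" and K: "(\<lambda>n. real (K n)) \<in> o(\<lambda>n. sqrt (real n))"
  shows "eventually (\<lambda>n. K n < n) sequentially"
    and "(\<lambda>n. real (K n) * overlap_rate (n / lam) n (K n)) \<longlonglongrightarrow> 0"
proof -
  have "(\<lambda>n. (K n / sqrt n) ^ 2) \<longlonglongrightarrow> 0"
    using tendsto_power[OF smalloD_tendsto[OF K], of 2] by simp
  then have K2: "(\<lambda>n. real (K n) ^ 2 / n) \<longlonglongrightarrow> 0"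
    by (simp add: power_divide)
  have "(\<lambda>n. real (K n) / n) \<longlonglongrightarrow> 0"
  proof (rule Lim_null_comparison[OF _ K2])
    have "real (K n) \<le> real (K n) ^ 2" for n
      by (cases "K n") (auto simp: power2_eq_square)
    then show "eventually (\<lambda>n. norm (real (K n) / n) \<le> real (K n) ^ 2 / n) sequentially"
      by (intro always_eventually allI) (simp add: divide_right_mono)
  qed
  then have "eventually (\<lambda>n. real (K n) / n < (lam - 1) / (lam + 1)) sequentially"
    using lam by (intro order_tendstoD(2)) auto
  moreover have "eventually (\<lambda>n. 0 < real n) sequentially"
    using filterlim_real_sequentially by (simp add: filterlim_at_top_dense)
  ultimately have ev: "eventually (\<lambda>n. K n < n \<and> real (K n) * overlap_rate (n / lam) n (K n)
      \<le> 2 * lam * (lam + 1) / (lam - 1) * (real (K n) ^ 2 / n)) sequentially"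
  proof eventually_elim
    case (elim n)
    then show ?case
      using overlap_rate_supercritical_le[OF lam, of n "K n"] by auto
  qed
  then show "eventually (\<lambda>n. K n < n) sequentially"
    by (rule eventually_mono) simp
  show "(\<lambda>n. real (K n) * overlap_rate (n / lam) n (K n)) \<longlonglongrightarrow> 0"
  proof (rule Lim_null_comparison)
    show "eventually (\<lambda>n. norm (real (K n) * overlap_rate (n / lam) n (K n))
        \<le> 2 * lam * (lam + 1) / (lam - 1) * (real (K n) ^ 2 / n)) sequentially"
      using ev by (rule eventually_mono) (use lam in \<open>auto simp: overlap_rate_nonneg\<close>)
    show "(\<lambda>n. 2 * lam * (lam + 1) / (lam - 1) * (real (K n) ^ 2 / n)) \<longlonglongrightarrow> 0"
      by (intro tendsto_mult_right_zero K2)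
  qed
qed

lemma subcritical_overlap_rate_tendsto_0:
  fixes lam :: real and K :: "nat \<Rightarrow> nat"
  defines "L \<equiv> ln (1 / lam)"
  assumes lam: "0 < lam" "lam < 1"
    and K: "filterlim (\<lambda>n. (ln n / L - K n) / ln (ln n)) at_top sequentially"
  shows "eventually (\<lambda>n. K n < n) sequentially"
    and "(\<lambda>n. real (K n) * overlap_rate (n / lam) n (K n)) \<longlonglongrightarrow> 0"
proof -
  have L: "0 < L"
    using lam by (simp add: L_def)
  have ln_at_top: "filterlim (\<lambda>n. ln (real n)) at_top sequentially"
    by real_asymp
  have "eventually (\<lambda>n. 4 / L \<le> (ln n / L - K n) / ln (ln n)) sequentially"
    using K by (simp add: filterlim_at_top)
  moreover have "eventually (\<lambda>n. 2 \<le> ln (real n)) sequentially"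
    using ln_at_top by (simp add: filterlim_at_top)
  moreover have "eventually (\<lambda>n. ln (real n) / n < L / 2) sequentially"
    by (rule order_tendstoD(2)) (use L in \<open>real_asymp, simp\<close>)
  moreover have "eventually (\<lambda>n. ln (real n) ^ 2 / n < L ^ 2 / 4) sequentially"
    by (rule order_tendstoD(2)) (use L in \<open>real_asymp, simp\<close>)
  moreover have "eventually (\<lambda>n. 1 < real n) sequentially"
    using filterlim_real_sequentially by (simp add: filterlim_at_top_dense)
  ultimately have ev: "eventually (\<lambda>n. K n < n \<and> real (K n) * overlap_rate (n / lam) n (K n)
      \<le> 8 * exp 1 / (lam * L ^ 3) / ln n) sequentially"
  proof eventually_elim
    case (elim n)
    have "0 < ln (ln (real n))"
      using elim by simp
    then have "L * K n \<le> ln n - 4 * ln (ln n)"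
      using elim(1) L by (simp add: field_simps)
    then show ?case
      using overlap_rate_subcritical_le[OF lam, of n "K n"] elim by (auto simp: L_def)
  qed
  then show "eventually (\<lambda>n. K n < n) sequentially"
    by (rule eventually_mono) simp
  show "(\<lambda>n. real (K n) * overlap_rate (n / lam) n (K n)) \<longlonglongrightarrow> 0"
  proof (rule Lim_null_comparison)
    show "eventually (\<lambda>n. norm (real (K n) * overlap_rate (n / lam) n (K n))
        \<le> 8 * exp 1 / (lam * L ^ 3) / ln n) sequentially"
      using ev by (rule eventually_mono) (use lam in \<open>auto simp: overlap_rate_nonneg\<close>)
    show "(\<lambda>n. 8 * exp 1 / (lam * L ^ 3) / ln (real n)) \<longlonglongrightarrow> 0"
      by real_asymp
  qed
qed

theorem theorem6:
  fixes lam :: real and K :: "nat \<Rightarrow> nat"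
  assumes "lam > 0"
  assumes "(lam > 1 \<and> (\<lambda>n. real (K n)) \<in> o(\<lambda>n. sqrt (real n)))
         \<or> (lam < 1 \<and> filterlim (\<lambda>n. (ln (real n) / ln (1 / lam) - real (K n)) / ln (ln (real n)))
                                 at_top sequentially)"
  shows "(\<lambda>n. tv_dist (P0 n lam) (P1 n lam (K n))) \<longlonglongrightarrow> 0
       \<and> (\<forall>T :: nat \<Rightarrow> nat set set \<Rightarrow> bool.
            (\<lambda>n. measure_pmf.prob (P1 n lam (K n)) {G. T n G}
               - measure_pmf.prob (P0 n lam) {G. T n G}) \<longlonglongrightarrow> 0)"
proof -
  have "eventually (\<lambda>n. K n < n) sequentially
      \<and> (\<lambda>n. real (K n) * overlap_rate (n / lam) n (K n)) \<longlonglongrightarrow> 0"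
    using assms(2)
  proof
    assume "lam > 1 \<and> (\<lambda>n. real (K n)) \<in> o(\<lambda>n. sqrt (real n))"
    then show ?thesis
      using supercritical_overlap_rate_tendsto_0 by blast
  next
    assume "lam < 1 \<and> filterlim (\<lambda>n. (ln (real n) / ln (1 / lam) - real (K n)) / ln (ln (real n)))
                                 at_top sequentially"
    then show ?thesis
      using subcritical_overlap_rate_tendsto_0 assms(1) by blast
  qed
  then have tv: "(\<lambda>n. tv_dist (P0 n lam) (P1 n lam (K n))) \<longlonglongrightarrow> 0"
    using tv_dist_P0_P1_tendsto_0 assms(1) by blast
  have "(\<lambda>n. measure_pmf.prob (P1 n lam (K n)) {G. T n G}
      - measure_pmf.prob (P0 n lam) {G. T n G}) \<longlonglongrightarrow> 0" for T :: "nat \<Rightarrow> nat set set \<Rightarrow> bool"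
    by (rule Lim_null_comparison[OF _ tv]) (simp add: abs_prob_diff_le_tv_dist abs_minus_commute)
  with tv show ?thesis
    by blast
qed

end
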